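(* Let $S:\mathbb{R}^6\to\mathbb{R}^6$, $(a',b',c',d',e',f')\mapsto(a,b,c,d,e,f)$, be the map $$a=\tfrac12(a'+b'-d'+e'),\quad b=\tfrac12(-a'-b'-d'+e')-1,\quad c=c',$$ $$d=\tfrac12(-a'+b'+d'+e'),\quad e=\tfrac12(a'-b'+d'+e'),\quad f=f'.$$ If $(a',b',c',d',e',f')$ is SU(1,1)-admissible, then $S(a',b',c',d',e',f')$ is SU(2)-admissible.
   Context: A triple of reals $(x,y,z)$ (order matters) is SU(2)-admissible if $x+y-z\ge0$, $x-y+z\ge0$, $-x+y+z\ge0$ and $x+y+z\ge-1$. It is SU(1,1)-admissible if $z\ge x+y+1$, $x\le y+z$, $y\le x+z$ and $x+y+z\ge-1$. A 6-tuple $(a,b,c,d,e,f)$ of reals is called SU(2)-admissible (resp. SU(1,1)-admissible) if each of the four ordered triples $(a,b,c)$, $(c,d,e)$, $(a,f,e)$, $(b,d,f)$ is SU(2)-admissible (resp. SU(1,1)-admissible). *)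

theory Defs
  imports Main "HOL.Real"
begin

definition su2_adm :: "real \<Rightarrow> real \<Rightarrow> real \<Rightarrow> bool" where
  "su2_adm x y z \<longleftrightarrow> x + y - z \<ge> 0 \<and> x - y + z \<ge> 0 \<and> - x + y + z \<ge> 0 \<and> x + y + z \<ge> -1"

definition su11_adm :: "real \<Rightarrow> real \<Rightarrow> real \<Rightarrow> bool" where
  "su11_adm x y z \<longleftrightarrow> z \<ge> x + y + 1 \<and> x \<le> y + z \<and> y \<le> x + z \<and> x + y + z \<ge> -1"

definition su2_adm6 :: "real \<Rightarrow> real \<Rightarrow> real \<Rightarrow> real \<Rightarrow> real \<Rightarrow> real \<Rightarrow> bool" where
  "su2_adm6 a b c d e f \<longleftrightarrow> su2_adm a b c \<and> su2_adm c d e \<and> su2_adm a f e \<and> su2_adm b d f"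

definition su11_adm6 :: "real \<Rightarrow> real \<Rightarrow> real \<Rightarrow> real \<Rightarrow> real \<Rightarrow> real \<Rightarrow> bool" where
  "su11_adm6 a b c d e f \<longleftrightarrow> su11_adm a b c \<and> su11_adm c d e \<and> su11_adm a f e \<and> su11_adm b d f"

end

theory Submission
  imports Defs
begin

theorem mainTheorem1:
  fixes a' b' c' d' e' f' :: real
  assumes "su11_adm6 a' b' c' d' e' f'"
  shows "su2_adm6 ((a' + b' - d' + e') / 2) ((- a' - b' - d' + e') / 2 - 1) c'
                  ((- a' + b' + d' + e') / 2) ((a' - b' + d' + e') / 2) f'"
  using assms unfolding su11_adm6_def su11_adm_def su2_adm6_def su2_adm_def
  by (simp add: field_simps)

end
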